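(* Let $n$ be even, and let $S_1$ and $S_2$ be two disjoint sets of cells of an $n\times n$ array, each of which forms a $2$-factor that is the union of two cycles of length $n$. Then for any positive integers $s,t,u,v$ with $s>t+n$, $t>u+n$ and $u>v+n$, the cells of $S_1\cup S_2$ can be filled with nonzero integers so that the resulting array is shiftable, has support $\{s+i,\ t+i,\ u+i,\ v+i\mid 1\le i\le n\}$ (each of these $4n$ absolute values occurring exactly once), and the four entries in each row and in each column sum to $0$.
   Context: Cells of an $n\times n$ array are identified with edges of $K_{n,n}$ (cell $(i,j)$ ↔ edge $\{a_i,b_j\}$). A set of cells forms a $2$-factor if the corresponding edges form a spanning $2$-regular subgraph of $K_{n,n}$; a cycle of length $n$ here means a cycle in $K_{n,n}$ with $n$ edges. The support of an array is the set of absolute values of its entries. An array is shiftable if each row and each column contains the same number of positive and negative entries. *)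

theory Defs
  imports Main
begin

text \<open>Cells of an n x n array are pairs (i,j) with i,j < n; cell (i,j) corresponds
to the edge {a_i, b_j} of K_{n,n}.\<close>

definition cells :: "nat \<Rightarrow> (nat \<times> nat) set" where
  "cells n = {..<n} \<times> {..<n}"

definition two_factor :: "nat \<Rightarrow> (nat \<times> nat) set \<Rightarrow> bool" where
  "two_factor n S \<longleftrightarrow> S \<subseteq> cells n
     \<and> (\<forall>i<n. card {j. (i, j) \<in> S} = 2)
     \<and> (\<forall>j<n. card {i. (i, j) \<in> S} = 2)"

text \<open>A set of cells C is (the edge set of) a cycle of length L in K_{n,n}:
a bipartite cycle a_{r 0} b_{c 0} a_{r 1} b_{c 1} ... a_{r (m-1)} b_{c (m-1)} a_{r 0}
with m = L/2 \<ge> 2 distinct rows and m distinct columns.\<close>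

definition bip_cycle :: "nat \<Rightarrow> nat \<Rightarrow> (nat \<times> nat) set \<Rightarrow> bool" where
  "bip_cycle n L C \<longleftrightarrow> (\<exists>m r c. L = 2 * m \<and> 2 \<le> m
     \<and> inj_on r {..<m} \<and> inj_on c {..<m}
     \<and> r ` {..<m} \<subseteq> {..<n} \<and> c ` {..<m} \<subseteq> {..<n}
     \<and> C = {(r k, c k) | k. k < m} \<union> {(r (Suc k mod m), c k) | k. k < m})"

definition two_cycle_factor :: "nat \<Rightarrow> (nat \<times> nat) set \<Rightarrow> bool" where
  "two_cycle_factor n S \<longleftrightarrow> two_factor n S
     \<and> (\<exists>C1 C2. C1 \<inter> C2 = {} \<and> S = C1 \<union> C2 \<and> bip_cycle n n C1 \<and> bip_cycle n n C2)"

text \<open>An n x n (partially filled) integer array is represented by A :: nat => nat => int,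
with empty cells holding 0 (all filled cells hold nonzero entries).\<close>

definition shiftable :: "nat \<Rightarrow> (nat \<Rightarrow> nat \<Rightarrow> int) \<Rightarrow> bool" where
  "shiftable n A \<longleftrightarrow>
     (\<forall>i<n. card {j. j < n \<and> A i j > 0} = card {j. j < n \<and> A i j < 0})
   \<and> (\<forall>j<n. card {i. i < n \<and> A i j > 0} = card {i. i < n \<and> A i j < 0})"

end

theory Submission
  imports Defs
begin

text \<open>A cycle of length \<open>n = 2m\<close> is a closed walk through its \<open>2m\<close> cells in which
  consecutive cells alternately share a column and a row. Writing \<open>\<sigma> (-1)^q (X + q + 1)\<close>
  into the \<open>q\<close>-th cell, every row and every column of the cycle receives one positive and one
  negative entry of consecutive absolute values, so every column sums to \<open>-\<sigma>\<close> and every row to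
  \<open>\<sigma>\<close>, except the row where the walk closes up, which sums to \<open>\<sigma> (1 - n)\<close>; this row can be
  chosen freely by rotating the walk. The two cycles of \<open>S1\<close> are labelled with \<open>\<sigma> = 1\<close> and the
  two cycles of \<open>S2\<close> with \<open>\<sigma> = -1\<close>, using the four shifted ranges of absolute values; since
  the cycles of a 2-factor partition the rows and the columns, all column sums cancel. The row
  sums cancel as well provided both factors close up at the same two rows \<open>x\<close> and \<open>y\<close>, with \<open>x\<close>
  and \<open>y\<close> on different cycles of each factor. Such rows exist because the row sets of the two
  cycles of a factor are complementary halves of the rows, and two splittings of a set into
  halves always have two crossing points.\<close>


section \<open>Arrays with disjoint supports\<close>

definition array_support :: "(nat \<Rightarrow> nat \<Rightarrow> 'a::zero) \<Rightarrow> (nat \<times> nat) set" where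
  "array_support A = {(i, j). A i j \<noteq> 0}"

lemma array_support_disjoint_iff:
  "array_support F \<inter> array_support G = {} \<longleftrightarrow> (\<forall>i j. F i j = 0 \<or> G i j = 0)"
  by (auto simp: array_support_def)

lemma array_support_add:
  fixes F G :: "nat \<Rightarrow> nat \<Rightarrow> 'a::monoid_add"
  assumes "array_support F \<inter> array_support G = {}"
  shows "array_support (\<lambda>i j. F i j + G i j) = array_support F \<union> array_support G"
  using assms unfolding array_support_disjoint_iff by (force simp: array_support_def)

lemma card_add_disjoint:
  fixes f g :: "nat \<Rightarrow> 'a::monoid_add"
  assumes "\<And>k. f k = 0 \<or> g k = 0" and "\<not> P 0"
  shows "card {k. k < n \<and> P (f k + g k)} = card {k. k < n \<and> P (f k)} + card {k. k < n \<and> P (g k)}"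
proof -
  have "P (f k + g k) \<longleftrightarrow> P (f k) \<or> P (g k)" and "\<not> (P (f k) \<and> P (g k))" for k
    using assms(1)[of k] assms(2) by auto
  then have "{k. k < n \<and> P (f k + g k)} = {k. k < n \<and> P (f k)} \<union> {k. k < n \<and> P (g k)}"
    and "{k. k < n \<and> P (f k)} \<inter> {k. k < n \<and> P (g k)} = {}"
    by blast+
  then show ?thesis by (simp add: card_Un_disjoint)
qed

lemma shiftable_add:
  assumes "array_support F \<inter> array_support G = {}" and "shiftable n F" and "shiftable n G"
  shows "shiftable n (\<lambda>i j. F i j + G i j)"
proof -
  have pos: "card {k. k < n \<and> 0 < f k + g k} = card {k. k < n \<and> 0 < f k} + card {k. k < n \<and> 0 < g k}"
    and neg: "card {k. k < n \<and> f k + g k < 0} = card {k. k < n \<and> f k < 0} + card {k. k < n \<and> g k < 0}"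
    if "\<And>k. f k = 0 \<or> g k = 0" for f g :: "nat \<Rightarrow> int"
    using card_add_disjoint[OF that, of "\<lambda>x. 0 < x"] card_add_disjoint[OF that, of "\<lambda>x. x < 0"] by auto
  have "\<forall>i j. F i j = 0 \<or> G i j = 0" using assms(1) by (simp add: array_support_disjoint_iff)
  then show ?thesis
    using assms(2,3) unfolding shiftable_def by (simp add: pos neg)
qed

lemma bij_betw_abs_add:
  fixes F G :: "nat \<Rightarrow> nat \<Rightarrow> int"
  assumes "array_support F \<subseteq> C" and "array_support G \<subseteq> D" and "C \<inter> D = {}"
    and "bij_betw (\<lambda>(i, j). \<bar>F i j\<bar>) C V" and "bij_betw (\<lambda>(i, j). \<bar>G i j\<bar>) D W"
    and "V \<inter> W = {}"
  shows "bij_betw (\<lambda>(i, j). \<bar>F i j + G i j\<bar>) (C \<union> D) (V \<union> W)"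
proof (rule bij_betw_combine)
  have "G i j = 0" if "(i, j) \<in> C" for i j using that assms(2,3) by (auto simp: array_support_def)
  with assms(4) show "bij_betw (\<lambda>(i, j). \<bar>F i j + G i j\<bar>) C V"
    by (auto elim!: bij_betw_cong[THEN iffD1, rotated])
  have "F i j = 0" if "(i, j) \<in> D" for i j using that assms(1,3) by (auto simp: array_support_def)
  with assms(5) show "bij_betw (\<lambda>(i, j). \<bar>F i j + G i j\<bar>) D W"
    by (auto elim!: bij_betw_cong[THEN iffD1, rotated])
qed (rule assms(6))

section \<open>Writing a sequence into an injectively enumerated set of cells\<close>

definition fill_cells ::
    "('q \<Rightarrow> nat \<times> nat) \<Rightarrow> 'q set \<Rightarrow> ('q \<Rightarrow> 'a::zero) \<Rightarrow> nat \<Rightarrow> nat \<Rightarrow> 'a" where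
  "fill_cells p Q g i j = (if (i, j) \<in> p ` Q then g (the_inv_into Q p (i, j)) else 0)"

lemma fill_cells_at:
  assumes "inj_on p Q" "q \<in> Q" "p q = (i, j)"
  shows "fill_cells p Q g i j = g q"
proof -
  have "(i, j) \<in> p ` Q" using assms(2,3) by (metis image_eqI)
  moreover have "the_inv_into Q p (i, j) = q" using assms by (metis the_inv_into_f_f)
  ultimately show ?thesis by (simp add: fill_cells_def)
qed

lemma fill_cells_outside: "(i, j) \<notin> p ` Q \<Longrightarrow> fill_cells p Q g i j = 0"
  by (simp add: fill_cells_def)

lemma fill_cells_transpose:
  assumes "inj_on p Q"
  shows "fill_cells (prod.swap \<circ> p) Q g j i = fill_cells p Q g i j"
proof (cases "(i, j) \<in> p ` Q")
  case True
  then obtain q where q: "q \<in> Q" "p q = (i, j)" by (metis imageE)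
  have "inj_on (prod.swap \<circ> p) Q" using assms by (simp add: comp_inj_on)
  then have "fill_cells (prod.swap \<circ> p) Q g j i = g q"
    by (rule fill_cells_at) (use q in auto)
  also have "\<dots> = fill_cells p Q g i j" by (rule fill_cells_at[OF assms q, symmetric])
  finally show ?thesis .
next
  case False
  then have "(j, i) \<notin> (prod.swap \<circ> p) ` Q" by (auto simp: prod.swap_def prod_eq_iff)
  with False show ?thesis by (simp add: fill_cells_outside)
qed

lemma array_support_fill_cells:
  assumes "inj_on p Q" "\<And>q. q \<in> Q \<Longrightarrow> g q \<noteq> 0"
  shows "array_support (fill_cells p Q g) = p ` Q"
proof -
  have "fill_cells p Q g i j \<noteq> 0 \<longleftrightarrow> (i, j) \<in> p ` Q" for i j
  proof
    assume "fill_cells p Q g i j \<noteq> 0"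
    then show "(i, j) \<in> p ` Q" using fill_cells_outside by metis
  next
    assume "(i, j) \<in> p ` Q"
    then obtain q where "q \<in> Q" "p q = (i, j)" by (metis imageE)
    then show "fill_cells p Q g i j \<noteq> 0" using assms by (simp add: fill_cells_at)
  qed
  then show ?thesis by (auto simp: array_support_def)
qed

lemma bij_betw_fill_cells:
  assumes "inj_on p Q" and "bij_betw (\<lambda>q. h (g q)) Q V"
  shows "bij_betw (\<lambda>(i, j). h (fill_cells p Q g i j)) (p ` Q) V"
proof -
  have "bij_betw ((\<lambda>(i, j). h (fill_cells p Q g i j)) \<circ> p) Q V"
    using assms(2) by (rule bij_betw_cong[THEN iffD1, rotated])
      (simp add: fill_cells_at[OF assms(1)] split: prod.split)
  then show ?thesis
    using bij_betw_comp_iff[OF inj_on_imp_bij_betw[OF assms(1)]] by blast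
qed

lemma bij_betw_row_of_image:
  assumes "inj_on p Q"
  shows "bij_betw (snd \<circ> p) {q \<in> Q. fst (p q) = i} {j. (i, j) \<in> p ` Q}"
proof (rule bij_betw_imageI)
  show "inj_on (snd \<circ> p) {q \<in> Q. fst (p q) = i}"
  proof (rule inj_onI)
    fix q q' assume q: "q \<in> {q \<in> Q. fst (p q) = i}" "q' \<in> {q \<in> Q. fst (p q) = i}"
      and "(snd \<circ> p) q = (snd \<circ> p) q'"
    then have "p q = p q'" by (simp add: prod_eq_iff)
    with q show "q = q'" using assms by (simp add: inj_on_eq_iff)
  qed
  show "(snd \<circ> p) ` {q \<in> Q. fst (p q) = i} = {j. (i, j) \<in> p ` Q}"
    by (auto simp: image_iff prod_eq_iff)
qed

lemma bij_betw_col_of_image: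
  assumes "inj_on p Q"
  shows "bij_betw (fst \<circ> p) {q \<in> Q. snd (p q) = j} {i. (i, j) \<in> p ` Q}"
proof (rule bij_betw_imageI)
  show "inj_on (fst \<circ> p) {q \<in> Q. snd (p q) = j}"
  proof (rule inj_onI)
    fix q q' assume q: "q \<in> {q \<in> Q. snd (p q) = j}" "q' \<in> {q \<in> Q. snd (p q) = j}"
      and "(fst \<circ> p) q = (fst \<circ> p) q'"
    then have "p q = p q'" by (simp add: prod_eq_iff)
    with q show "q = q'" using assms by (simp add: inj_on_eq_iff)
  qed
  show "(fst \<circ> p) ` {q \<in> Q. snd (p q) = j} = {i. (i, j) \<in> p ` Q}"
    by (auto simp: image_iff prod_eq_iff)
qed

lemma sum_row_fill_cells:
  assumes "inj_on p Q" and "snd ` p ` Q \<subseteq> {..<N}"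
  shows "(\<Sum>j<N. fill_cells p Q g i j) = (\<Sum>q | q \<in> Q \<and> fst (p q) = i. g q)"
proof -
  have "{j. (i, j) \<in> p ` Q} \<subseteq> {..<N}"
    using assms(2) by (blast intro: rev_image_eqI snd_conv[symmetric])
  then have "(\<Sum>j<N. fill_cells p Q g i j) = (\<Sum>j | (i, j) \<in> p ` Q. fill_cells p Q g i j)"
    by (intro sum.mono_neutral_right) (auto simp: fill_cells_outside)
  also have "\<dots> = (\<Sum>q | q \<in> Q \<and> fst (p q) = i. fill_cells p Q g i (snd (p q)))"
    using sum.reindex_bij_betw[OF bij_betw_row_of_image[OF assms(1)], of "fill_cells p Q g i"] by simp
  also have "\<dots> = (\<Sum>q | q \<in> Q \<and> fst (p q) = i. g q)"
  proof (rule sum.cong)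
    fix q assume "q \<in> {q. q \<in> Q \<and> fst (p q) = i}"
    then show "fill_cells p Q g i (snd (p q)) = g q"
      by (intro fill_cells_at[OF assms(1)]) (auto simp: prod_eq_iff)
  qed simp
  finally show ?thesis .
qed

lemma card_row_fill_cells:
  assumes "inj_on p Q" and "snd ` p ` Q \<subseteq> {..<N}" and "\<not> P 0"
  shows "card {j. j < N \<and> P (fill_cells p Q g i j)} = card {q \<in> Q. fst (p q) = i \<and> P (g q)}"
proof -
  have row: "{j. j < N \<and> P (fill_cells p Q g i j)} = (snd \<circ> p) ` {q \<in> Q. fst (p q) = i \<and> P (g q)}"
  proof (intro set_eqI iffI)
    fix j assume j: "j \<in> {j. j < N \<and> P (fill_cells p Q g i j)}"
    then have "(i, j) \<in> p ` Q" using assms(3) fill_cells_outside by (metis mem_Collect_eq)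
    then obtain q where q: "q \<in> Q" "p q = (i, j)" by (metis imageE)
    then have "P (g q)" using j fill_cells_at[OF assms(1) q, where g = g] by simp
    with q show "j \<in> (snd \<circ> p) ` {q \<in> Q. fst (p q) = i \<and> P (g q)}"
      by (intro rev_image_eqI[of q]) auto
  next
    fix j assume "j \<in> (snd \<circ> p) ` {q \<in> Q. fst (p q) = i \<and> P (g q)}"
    then obtain q where q: "q \<in> Q" "fst (p q) = i" "P (g q)" "j = snd (p q)" by auto
    then have "p q = (i, j)" by (simp add: prod_eq_iff)
    moreover have "j < N" using assms(2) q(1,4) by blast
    ultimately show "j \<in> {j. j < N \<and> P (fill_cells p Q g i j)}"
      using fill_cells_at[OF assms(1) q(1), where g = g] q(3) by simp
  qed
  have "inj_on (snd \<circ> p) {q \<in> Q. fst (p q) = i \<and> P (g q)}"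
    using bij_betw_imp_inj_on[OF bij_betw_row_of_image[OF assms(1), of i]] by (rule inj_on_subset) auto
  then show ?thesis unfolding row by (rule card_image)
qed

lemma sum_col_fill_cells:
  assumes "inj_on p Q" and "fst ` p ` Q \<subseteq> {..<N}"
  shows "(\<Sum>i<N. fill_cells p Q g i j) = (\<Sum>q | q \<in> Q \<and> snd (p q) = j. g q)"
proof -
  have "inj_on (prod.swap \<circ> p) Q" using assms(1) by (simp add: comp_inj_on)
  moreover have "snd ` (prod.swap \<circ> p) ` Q \<subseteq> {..<N}" using assms(2) by (simp add: image_image)
  ultimately show ?thesis
    using sum_row_fill_cells[of "prod.swap \<circ> p" Q N g j] by (simp add: fill_cells_transpose[OF assms(1)])
qed

lemma card_col_fill_cells:
  assumes "inj_on p Q" and "fst ` p ` Q \<subseteq> {..<N}" and "\<not> P 0"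
  shows "card {i. i < N \<and> P (fill_cells p Q g i j)} = card {q \<in> Q. snd (p q) = j \<and> P (g q)}"
proof -
  have "inj_on (prod.swap \<circ> p) Q" using assms(1) by (simp add: comp_inj_on)
  moreover have "snd ` (prod.swap \<circ> p) ` Q \<subseteq> {..<N}" using assms(2) by (simp add: image_image)
  ultimately show ?thesis
    using card_row_fill_cells[of "prod.swap \<circ> p" Q N P g j] assms(3)
    by (simp add: fill_cells_transpose[OF assms(1)])
qed

section \<open>Labelling a single cycle\<close>

(* Two cells of a cycle sharing a row or a column are cyclically consecutive on its walk (see
   cycle_walk.cell below), so their labels have opposite signs and absolute values differing by one. *)
definition alternating_label :: "int \<Rightarrow> int \<Rightarrow> nat \<Rightarrow> int" where
  "alternating_label \<sigma> X q = \<sigma> * (-1) ^ q * (X + int q + 1)"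

lemma abs_alternating_label:
  "\<bar>\<sigma>\<bar> = 1 \<Longrightarrow> X \<ge> 0 \<Longrightarrow> \<bar>alternating_label \<sigma> X q\<bar> = X + int q + 1"
  by (simp add: alternating_label_def abs_mult)

lemma alternating_label_nonzero:
  "\<bar>\<sigma>\<bar> = 1 \<Longrightarrow> X \<ge> 0 \<Longrightarrow> alternating_label \<sigma> X q \<noteq> 0"
  by (auto simp: alternating_label_def)

lemma alternating_label_pair_sum:
  assumes "even a" and "odd b"
  shows "(\<Sum>q\<in>{a, b}. alternating_label \<sigma> X q) = \<sigma> * (int a - int b)"
proof -
  have "a \<noteq> b" using assms by auto
  with assms show ?thesis by (simp add: alternating_label_def algebra_simps)
qed

lemma alternating_label_pair_balanced:
  assumes "E = {} \<or> (\<exists>a b. even a \<and> odd b \<and> E = {a, b})" and "\<bar>\<sigma>\<bar> = 1" and "X \<ge> 0"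
  shows "card {q \<in> E. 0 < alternating_label \<sigma> X q} = card {q \<in> E. alternating_label \<sigma> X q < 0}"
  using assms(1)
proof
  assume "\<exists>a b. even a \<and> odd b \<and> E = {a, b}"
  then obtain a b where ab: "even a" "odd b" "E = {a, b}" by blast
  from assms(2) consider "\<sigma> = 1" | "\<sigma> = -1" by linarith
  then show ?thesis
  proof cases
    case 1
    then have "{q \<in> E. 0 < alternating_label \<sigma> X q} = {a}" "{q \<in> E. alternating_label \<sigma> X q < 0} = {b}"
      using ab assms(3) by (auto simp: alternating_label_def)
    then show ?thesis by simp
  next
    case 2
    then have "{q \<in> E. 0 < alternating_label \<sigma> X q} = {b}" "{q \<in> E. alternating_label \<sigma> X q < 0} = {a}"
      using ab assms(3) by (auto simp: alternating_label_def)
    then show ?thesis by simp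
  qed
qed simp

lemma alternating_label_image:
  "(\<lambda>q. X + int q + 1) ` {..<n} = (\<lambda>i. X + int i) ` {1..n}"
proof -
  have "(\<lambda>i. X + int i) ` {1..n} = (\<lambda>i. X + int i) ` Suc ` {..<n}"
    by (simp only: image_Suc_lessThan)
  then show ?thesis by (simp add: image_image algebra_simps)
qed

locale cycle_walk =
  fixes m :: nat and r c :: "nat \<Rightarrow> nat"
  assumes two_le_m: "2 \<le> m" and inj_r: "inj_on r {..<m}" and inj_c: "inj_on c {..<m}"
begin

definition cell :: "nat \<Rightarrow> nat \<times> nat" where
  "cell q = (if even q then (r (q div 2), c (q div 2)) else (r (Suc (q div 2) mod m), c (q div 2)))"

lemma Suc_mod_neq: "k < m \<Longrightarrow> Suc k mod m \<noteq> k"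
  using two_le_m by (cases "Suc k = m") auto

lemma inj_cell: "inj_on cell {..<2 * m}"
proof (rule inj_onI)
  fix q q' assume q: "q \<in> {..<2 * m}" and q': "q' \<in> {..<2 * m}" and eq: "cell q = cell q'"
  have lt: "q div 2 < m" "q' div 2 < m" "Suc (q div 2) mod m < m" using q q' two_le_m by auto
  have "c (q div 2) = c (q' div 2)" using eq by (simp add: cell_def split: if_splits)
  then have half: "q div 2 = q' div 2" using inj_c lt by (simp add: inj_on_eq_iff)
  show "q = q'"
  proof (cases "even q \<longleftrightarrow> even q'")
    case True
    with half show ?thesis by (metis div_mult_mod_eq mod2_eq_if)
  next
    case False
    then have "r (q div 2) = r (Suc (q div 2) mod m)" using eq half by (auto simp: cell_def split: if_splits)
    then have "q div 2 = Suc (q div 2) mod m" using inj_r lt by (simp add: inj_on_eq_iff)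
    with Suc_mod_neq lt show ?thesis by metis
  qed
qed

lemma cell_image:
  "cell ` {..<2 * m} = {(r k, c k) | k. k < m} \<union> {(r (Suc k mod m), c k) | k. k < m}"
proof (intro equalityI subsetI)
  fix z assume "z \<in> cell ` {..<2 * m}"
  then obtain q where "q < 2 * m" "z = cell q" by auto
  then show "z \<in> {(r k, c k) | k. k < m} \<union> {(r (Suc k mod m), c k) | k. k < m}"
    by (auto simp: cell_def)
next
  fix z assume "z \<in> {(r k, c k) | k. k < m} \<union> {(r (Suc k mod m), c k) | k. k < m}"
  then obtain k where "k < m" "z = cell (2 * k) \<or> z = cell (2 * k + 1)" by (auto simp: cell_def)
  then show "z \<in> cell ` {..<2 * m}" by auto
qed

lemma fst_cell_image: "fst ` cell ` {..<2 * m} = r ` {..<m}"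
  unfolding cell_image using two_le_m by force

lemma snd_cell_image: "snd ` cell ` {..<2 * m} = c ` {..<m}"
  unfolding cell_image by force

lemma row_index_eq:
  assumes "q < 2 * m" and "k < m"
  shows "(if even q then q div 2 else Suc (q div 2) mod m) = k \<longleftrightarrow>
    q = 2 * k \<or> q = (if k = 0 then 2 * m - 1 else 2 * k - 1)"
proof (cases "even q")
  case True
  then show ?thesis by auto
next
  case False
  then obtain h where q: "q = 2 * h + 1" by (metis oddE)
  with assms have "h < m" by simp
  then have "Suc h mod m = (if Suc h = m then 0 else Suc h)" by simp
  with q assms show ?thesis by auto
qed

lemma row_steps:
  assumes "k < m"
  shows "{q \<in> {..<2 * m}. fst (cell q) = r k} = {2 * k, if k = 0 then 2 * m - 1 else 2 * k - 1}"
proof -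
  have "fst (cell q) = r k \<longleftrightarrow> (if even q then q div 2 else Suc (q div 2) mod m) = k"
    if "q < 2 * m" for q
    using that assms two_le_m inj_on_eq_iff[OF inj_r] by (simp add: cell_def)
  then show ?thesis using assms two_le_m row_index_eq by auto
qed

lemma row_steps_outside: "i \<notin> r ` {..<m} \<Longrightarrow> {q \<in> {..<2 * m}. fst (cell q) = i} = {}"
  using fst_cell_image by blast

lemma col_steps:
  assumes "k < m"
  shows "{q \<in> {..<2 * m}. snd (cell q) = c k} = {2 * k, 2 * k + 1}"
proof -
  have "snd (cell q) = c k \<longleftrightarrow> q div 2 = k" if "q < 2 * m" for q
    using that assms inj_on_eq_iff[OF inj_c, of "q div 2" k] by (simp add: cell_def)
  then show ?thesis using assms by auto
qed

lemma col_steps_outside: "j \<notin> c ` {..<m} \<Longrightarrow> {q \<in> {..<2 * m}. snd (cell q) = j} = {}"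
  using snd_cell_image by blast

lemma row_steps_even_odd:
  "{q \<in> {..<2 * m}. fst (cell q) = i} = {} \<or>
   (\<exists>a b. even a \<and> odd b \<and> {q \<in> {..<2 * m}. fst (cell q) = i} = {a, b})"
proof (cases "i \<in> r ` {..<m}")
  case True
  then obtain k where k: "k < m" "i = r k" by blast
  have "even (2 * k)" "odd (if k = 0 then 2 * m - 1 else 2 * k - 1)" using two_le_m by auto
  with row_steps[OF k(1)] show ?thesis unfolding k(2) by blast
qed (use row_steps_outside in blast)

lemma col_steps_even_odd:
  "{q \<in> {..<2 * m}. snd (cell q) = j} = {} \<or>
   (\<exists>a b. even a \<and> odd b \<and> {q \<in> {..<2 * m}. snd (cell q) = j} = {a, b})"
proof (cases "j \<in> c ` {..<m}")
  case True
  then obtain k where k: "k < m" "j = c k" by blast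
  have "even (2 * k)" "odd (2 * k + 1)" by auto
  with col_steps[OF k(1)] show ?thesis unfolding k(2) by blast
qed (use col_steps_outside in blast)

lemma card_row_steps: "card {q \<in> {..<2 * m}. fst (cell q) = i} = (if i \<in> r ` {..<m} then 2 else 0)"
proof (cases "i \<in> r ` {..<m}")
  case True
  then obtain k where k: "k < m" "i = r k" by blast
  have "odd (if k = 0 then 2 * m - 1 else 2 * k - 1)" using two_le_m by auto
  then have "2 * k \<noteq> (if k = 0 then 2 * m - 1 else 2 * k - 1)" by presburger
  then show ?thesis unfolding k(2) row_steps[OF k(1)] using k by simp
next
  case False
  then show ?thesis unfolding row_steps_outside[OF False] by simp
qed

lemma card_col_steps: "card {q \<in> {..<2 * m}. snd (cell q) = j} = (if j \<in> c ` {..<m} then 2 else 0)"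
proof (cases "j \<in> c ` {..<m}")
  case True
  then obtain k where k: "k < m" "j = c k" by blast
  then show ?thesis unfolding k(2) col_steps[OF k(1)] by simp
next
  case False
  then show ?thesis unfolding col_steps_outside[OF False] by simp
qed

lemma row_label_sum:
  "(\<Sum>q | q \<in> {..<2 * m} \<and> fst (cell q) = i. alternating_label \<sigma> X q) =
   (if i \<in> r ` {..<m} then if i = r 0 then \<sigma> * (1 - 2 * int m) else \<sigma> else 0)"
proof (cases "i \<in> r ` {..<m}")
  case True
  then obtain k where k: "k < m" "i = r k" by blast
  have closing_row: "i = r 0 \<longleftrightarrow> k = 0" using k two_le_m inj_on_eq_iff[OF inj_r, of k 0] by auto
  define b where "b = (if k = 0 then 2 * m - 1 else 2 * k - 1)"
  have "odd b" and "int b = (if k = 0 then 2 * int m - 1 else 2 * int k - 1)"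
    using two_le_m by (auto simp: b_def of_nat_diff)
  have "(\<Sum>q | q \<in> {..<2 * m} \<and> fst (cell q) = i. alternating_label \<sigma> X q) =
      (\<Sum>q\<in>{2 * k, b}. alternating_label \<sigma> X q)"
    unfolding k(2) row_steps[OF k(1)] b_def ..
  also have "\<dots> = \<sigma> * (int (2 * k) - int b)"
    using \<open>odd b\<close> by (intro alternating_label_pair_sum) simp_all
  also have "\<dots> = (if i = r 0 then \<sigma> * (1 - 2 * int m) else \<sigma>)"
    using closing_row \<open>int b = _\<close> by (simp add: algebra_simps)
  finally show ?thesis using True by simp
next
  case False
  then show ?thesis unfolding row_steps_outside[OF False] by simp
qed

lemma col_label_sum:
  "(\<Sum>q | q \<in> {..<2 * m} \<and> snd (cell q) = j. alternating_label \<sigma> X q) =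
   (if j \<in> c ` {..<m} then - \<sigma> else 0)"
proof (cases "j \<in> c ` {..<m}")
  case True
  then obtain k where k: "k < m" "j = c k" by blast
  have "(\<Sum>q | q \<in> {..<2 * m} \<and> snd (cell q) = j. alternating_label \<sigma> X q) =
      (\<Sum>q\<in>{2 * k, 2 * k + 1}. alternating_label \<sigma> X q)"
    unfolding k(2) col_steps[OF k(1)] ..
  also have "\<dots> = - \<sigma>" by (subst alternating_label_pair_sum) simp_all
  finally show ?thesis using True by simp
next
  case False
  then show ?thesis unfolding col_steps_outside[OF False] by simp
qed


definition labelling :: "int \<Rightarrow> int \<Rightarrow> nat \<Rightarrow> nat \<Rightarrow> int" where
  "labelling \<sigma> X = fill_cells cell {..<2 * m} (alternating_label \<sigma> X)"

lemma array_support_labelling: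
  "\<bar>\<sigma>\<bar> = 1 \<Longrightarrow> X \<ge> 0 \<Longrightarrow> array_support (labelling \<sigma> X) = cell ` {..<2 * m}"
  unfolding labelling_def by (intro array_support_fill_cells inj_cell alternating_label_nonzero)

lemma bij_betw_abs_labelling:
  assumes "\<bar>\<sigma>\<bar> = 1" and "X \<ge> 0"
  shows "bij_betw (\<lambda>(i, j). \<bar>labelling \<sigma> X i j\<bar>) (cell ` {..<2 * m}) ((\<lambda>i. X + int i) ` {1..2 * m})"
proof -
  have "bij_betw (\<lambda>q. \<bar>alternating_label \<sigma> X q\<bar>) {..<2 * m} ((\<lambda>i. X + int i) ` {1..2 * m})"
    unfolding abs_alternating_label[OF assms] alternating_label_image[symmetric]
    by (rule inj_on_imp_bij_betw) (simp add: inj_on_def)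
  then show ?thesis unfolding labelling_def by (rule bij_betw_fill_cells[OF inj_cell])
qed

lemma sum_row_labelling:
  assumes "c ` {..<m} \<subseteq> {..<N}"
  shows "(\<Sum>j<N. labelling \<sigma> X i j) =
    (if i \<in> r ` {..<m} then if i = r 0 then \<sigma> * (1 - 2 * int m) else \<sigma> else 0)"
  using assms unfolding labelling_def snd_cell_image[symmetric]
  by (simp only: sum_row_fill_cells[OF inj_cell] row_label_sum)

lemma sum_col_labelling:
  assumes "r ` {..<m} \<subseteq> {..<N}"
  shows "(\<Sum>i<N. labelling \<sigma> X i j) = (if j \<in> c ` {..<m} then - \<sigma> else 0)"
  using assms unfolding labelling_def fst_cell_image[symmetric]
  by (simp only: sum_col_fill_cells[OF inj_cell] col_label_sum)

lemma shiftable_labelling: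
  assumes "r ` {..<m} \<subseteq> {..<N}" and "c ` {..<m} \<subseteq> {..<N}" and "\<bar>\<sigma>\<bar> = 1" and "X \<ge> 0"
  shows "shiftable N (labelling \<sigma> X)"
proof -
  have rows: "fst ` cell ` {..<2 * m} \<subseteq> {..<N}" and cols: "snd ` cell ` {..<2 * m} \<subseteq> {..<N}"
    using assms(1,2) by (simp_all only: fst_cell_image snd_cell_image)
  show ?thesis
    unfolding shiftable_def labelling_def
    using card_row_fill_cells[OF inj_cell cols, where P = "\<lambda>v::int. 0 < v"]
      card_row_fill_cells[OF inj_cell cols, where P = "\<lambda>v::int. v < 0"]
      card_col_fill_cells[OF inj_cell rows, where P = "\<lambda>v::int. 0 < v"]
      card_col_fill_cells[OF inj_cell rows, where P = "\<lambda>v::int. v < 0"]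
      alternating_label_pair_balanced[OF row_steps_even_odd assms(3,4)]
      alternating_label_pair_balanced[OF col_steps_even_odd assms(3,4)]
    by simp
qed
end

lemma bip_cycle_length: "bip_cycle n L C \<Longrightarrow> 4 \<le> L"
  unfolding bip_cycle_def by auto

lemma bip_cycle_subset:
  assumes "bip_cycle n L C"
  shows "C \<subseteq> {..<n} \<times> {..<n}"
proof -
  obtain m r c where "2 \<le> m" and r: "r ` {..<m} \<subseteq> {..<n}" and c: "c ` {..<m} \<subseteq> {..<n}"
    and C: "C = {(r k, c k) | k. k < m} \<union> {(r (Suc k mod m), c k) | k. k < m}"
    using assms unfolding bip_cycle_def by blast
  have "r k < n" "c k < n" "r (Suc k mod m) < n" if "k < m" for k
    using r c that \<open>2 \<le> m\<close> by (auto simp: image_subset_iff)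
  then show ?thesis unfolding C by auto
qed

lemma bip_cycle_finite:
  assumes "bip_cycle n L C"
  shows "finite C"
  using bip_cycle_subset[OF assms] by (rule finite_subset) simp

lemma bip_cycle_card_rows:
  assumes "bip_cycle n L C"
  shows "2 * card (fst ` C) = L"
proof -
  obtain m r c where "L = 2 * m" "2 \<le> m" "inj_on r {..<m}"
    and C: "C = {(r k, c k) | k. k < m} \<union> {(r (Suc k mod m), c k) | k. k < m}"
    using assms unfolding bip_cycle_def by blast
  moreover have "fst ` C = r ` {..<m}"
  proof
    show "fst ` C \<subseteq> r ` {..<m}" using \<open>2 \<le> m\<close> unfolding C by auto
    show "r ` {..<m} \<subseteq> fst ` C"
    proof
      fix i assume "i \<in> r ` {..<m}"
      then obtain k where "k < m" "i = r k" by blast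
      then have "(i, c k) \<in> C" unfolding C by blast
      then show "i \<in> fst ` C" by (auto simp: fst_eq_Domain)
    qed
  qed
  ultimately show ?thesis by (simp add: card_image)
qed

lemma bij_betw_rotate:
  assumes "k0 < (m::nat)"
  shows "bij_betw (\<lambda>k. (k + k0) mod m) {..<m} {..<m}"
proof (rule bij_betw_byWitness[where f' = "\<lambda>k. (k + (m - k0)) mod m"])
  have "((a + k0) mod m + (m - k0)) mod m = a" and "((a + (m - k0)) mod m + k0) mod m = a"
    if "a < m" for a
  proof -
    have "((a + k0) mod m + (m - k0)) mod m = (a + k0 + (m - k0)) mod m" by (rule mod_add_left_eq)
    also have "\<dots> = a" using assms that by simp
    finally show "((a + k0) mod m + (m - k0)) mod m = a" .
    have "((a + (m - k0)) mod m + k0) mod m = (a + (m - k0) + k0) mod m" by (rule mod_add_left_eq)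
    also have "\<dots> = a" using assms that by simp
    finally show "((a + (m - k0)) mod m + k0) mod m = a" .
  qed
  then show "\<forall>a\<in>{..<m}. ((a + k0) mod m + (m - k0)) mod m = a"
    and "\<forall>a\<in>{..<m}. ((a + (m - k0)) mod m + k0) mod m = a" by auto
qed (use assms in auto)

lemma bip_cycle_walk:
  assumes "bip_cycle n L C" and "x \<in> fst ` C"
  obtains m r c where "cycle_walk m r c" "L = 2 * m" "C = cycle_walk.cell m r c ` {..<2 * m}"
    "r ` {..<m} \<subseteq> {..<n}" "c ` {..<m} \<subseteq> {..<n}" "r 0 = x"
proof -
  obtain m r c where L: "L = 2 * m" and two_le_m: "2 \<le> m" and inj: "inj_on r {..<m}" "inj_on c {..<m}"
    and bounds: "r ` {..<m} \<subseteq> {..<n}" "c ` {..<m} \<subseteq> {..<n}"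
    and C: "C = {(r k, c k) | k. k < m} \<union> {(r (Suc k mod m), c k) | k. k < m}"
    using assms(1) unfolding bip_cycle_def by blast
  have "x \<in> r ` {..<m}"
    using assms(2) two_le_m unfolding C by auto
  then obtain k0 where k0: "k0 < m" "x = r k0" by blast
  define \<phi> where "\<phi> k = (k + k0) mod m" for k
  have \<phi>: "bij_betw \<phi> {..<m} {..<m}" unfolding \<phi>_def using k0(1) by (rule bij_betw_rotate)
  have \<phi>_Suc: "\<phi> (Suc k mod m) = Suc (\<phi> k) mod m" for k
    by (simp add: \<phi>_def mod_add_left_eq mod_Suc_eq)
  interpret walk: cycle_walk m "r \<circ> \<phi>" "c \<circ> \<phi>"
    using two_le_m inj \<phi> by unfold_locales (auto simp: bij_betw_def intro: comp_inj_on)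
  have "C = (\<lambda>k. (r k, c k)) ` \<phi> ` {..<m} \<union> (\<lambda>k. (r (Suc k mod m), c k)) ` \<phi> ` {..<m}"
    using \<phi> unfolding C bij_betw_def by auto
  also have "\<dots> = walk.cell ` {..<2 * m}"
    unfolding walk.cell_image by (auto simp: \<phi>_Suc)
  finally have "C = walk.cell ` {..<2 * m}" .
  moreover have "(r \<circ> \<phi>) ` {..<m} = r ` {..<m}" "(c \<circ> \<phi>) ` {..<m} = c ` {..<m}"
    using \<phi> unfolding bij_betw_def by (metis image_comp)+
  moreover have "(r \<circ> \<phi>) 0 = x" using k0 by (simp add: \<phi>_def)
  ultimately show ?thesis using that walk.cycle_walk_axioms L bounds by simp
qed

lemma bip_cycle_row_degree:
  assumes "bip_cycle n L C"
  shows "card {j. (i, j) \<in> C} = (if i \<in> fst ` C then 2 else 0)"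
proof (cases "i \<in> fst ` C")
  case True
  obtain m r c where walk: "cycle_walk m r c" and "L = 2 * m" and C: "C = cycle_walk.cell m r c ` {..<2 * m}"
    and "r ` {..<m} \<subseteq> {..<n}" and "c ` {..<m} \<subseteq> {..<n}" and "r 0 = i"
    by (rule bip_cycle_walk[OF assms True])
  interpret cycle_walk m r c by (fact walk)
  have "card {j. (i, j) \<in> C} = card {q \<in> {..<2 * m}. fst (cell q) = i}"
    unfolding C by (rule bij_betw_same_card[OF bij_betw_row_of_image[OF inj_cell], symmetric])
  also have "\<dots> = 2" unfolding card_row_steps using \<open>r 0 = i\<close> two_le_m by auto
  finally show ?thesis using True by simp
next
  case False
  then have "{j. (i, j) \<in> C} = {}" by (auto simp: fst_eq_Domain)
  with False show ?thesis by simp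
qed

lemma bip_cycle_col_degree:
  assumes "bip_cycle n L C"
  shows "card {i. (i, j) \<in> C} = (if j \<in> snd ` C then 2 else 0)"
proof (cases "j \<in> snd ` C")
  case True
  then obtain x where "(x, j) \<in> C" by (auto simp: snd_eq_Range)
  then have "x \<in> fst ` C" by (auto simp: fst_eq_Domain)
  then obtain m r c where walk: "cycle_walk m r c" and "L = 2 * m" and C: "C = cycle_walk.cell m r c ` {..<2 * m}"
    and "r ` {..<m} \<subseteq> {..<n}" and "c ` {..<m} \<subseteq> {..<n}" and "r 0 = x"
    by (rule bip_cycle_walk[OF assms])
  interpret cycle_walk m r c by (fact walk)
  have "card {i. (i, j) \<in> C} = card {q \<in> {..<2 * m}. snd (cell q) = j}"
    unfolding C by (rule bij_betw_same_card[OF bij_betw_col_of_image[OF inj_cell], symmetric])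
  also have "\<dots> = 2" unfolding card_col_steps using True by (simp add: C snd_cell_image)
  finally show ?thesis using True by simp
next
  case False
  then have "{i. (i, j) \<in> C} = {}" by (auto simp: snd_eq_Range)
  with False show ?thesis by simp
qed

lemma bip_cycle_labelling:
  assumes "bip_cycle n n C" and "x \<in> fst ` C" and "\<bar>\<sigma>\<bar> = 1" and "X \<ge> 0"
  obtains F :: "nat \<Rightarrow> nat \<Rightarrow> int" where "array_support F = C" and "shiftable n F"
    and "bij_betw (\<lambda>(i, j). \<bar>F i j\<bar>) C ((\<lambda>i. X + int i) ` {1..n})"
    and "\<And>i. (\<Sum>j<n. F i j) = (if i \<in> fst ` C then if i = x then \<sigma> * (1 - int n) else \<sigma> else 0)"
    and "\<And>j. (\<Sum>i<n. F i j) = (if j \<in> snd ` C then - \<sigma> else 0)"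
proof -
  obtain m r c where walk: "cycle_walk m r c" and n: "n = 2 * m"
    and C: "C = cycle_walk.cell m r c ` {..<2 * m}"
    and bounds: "r ` {..<m} \<subseteq> {..<n}" "c ` {..<m} \<subseteq> {..<n}" and x: "r 0 = x"
    using bip_cycle_walk[OF assms(1,2)] by blast
  interpret cycle_walk m r c by (fact walk)
  have rows: "fst ` C = r ` {..<m}" and cols: "snd ` C = c ` {..<m}"
    unfolding C by (simp_all only: fst_cell_image snd_cell_image)
  show ?thesis
  proof (rule that[of "labelling \<sigma> X"])
    show "array_support (labelling \<sigma> X) = C"
      unfolding C using assms(3,4) by (rule array_support_labelling)
    show "shiftable n (labelling \<sigma> X)"
      using bounds assms(3,4) by (rule shiftable_labelling)
    show "bij_betw (\<lambda>(i, j). \<bar>labelling \<sigma> X i j\<bar>) C ((\<lambda>i. X + int i) ` {1..n})"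
      unfolding C n using assms(3,4) by (rule bij_betw_abs_labelling)
    show "(\<Sum>j<n. labelling \<sigma> X i j) =
        (if i \<in> fst ` C then if i = x then \<sigma> * (1 - int n) else \<sigma> else 0)" for i
      unfolding sum_row_labelling[OF bounds(2)] rows x[symmetric] using n by simp
    show "(\<Sum>i<n. labelling \<sigma> X i j) = (if j \<in> snd ` C then - \<sigma> else 0)" for j
      unfolding sum_col_labelling[OF bounds(1)] cols ..
  qed
qed

section \<open>Two cycles forming a 2-factor\<close>

lemma cycle_pair_row_iff:
  assumes "two_factor n (C1 \<union> C2)" and "C1 \<inter> C2 = {}"
    and "bip_cycle n n C1" and "bip_cycle n n C2" and "i < n"
  shows "i \<in> fst ` C1 \<longleftrightarrow> i \<notin> fst ` C2"
proof -
  have fin: "finite {j. (i, j) \<in> C}" if "bip_cycle n n C" for C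
  proof (rule finite_subset)
    show "{j. (i, j) \<in> C} \<subseteq> snd ` C" by (auto simp: snd_eq_Range)
    show "finite (snd ` C)" using bip_cycle_finite[OF that] by (rule finite_imageI)
  qed
  have "2 = card {j. (i, j) \<in> C1 \<union> C2}"
    using assms(1,5) unfolding two_factor_def by simp
  also have "\<dots> = card {j. (i, j) \<in> C1} + card {j. (i, j) \<in> C2}"
    using assms(2) fin[OF assms(3)] fin[OF assms(4)] by (subst card_Un_disjoint[symmetric]) (auto intro: arg_cong[where f = card])
  finally show ?thesis
    unfolding bip_cycle_row_degree[OF assms(3)] bip_cycle_row_degree[OF assms(4)]
    by (cases "i \<in> fst ` C1"; cases "i \<in> fst ` C2") simp_all
qed

lemma cycle_pair_col_iff:
  assumes "two_factor n (C1 \<union> C2)" and "C1 \<inter> C2 = {}"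
    and "bip_cycle n n C1" and "bip_cycle n n C2" and "j < n"
  shows "j \<in> snd ` C1 \<longleftrightarrow> j \<notin> snd ` C2"
proof -
  have fin: "finite {i. (i, j) \<in> C}" if "bip_cycle n n C" for C
  proof (rule finite_subset)
    show "{i. (i, j) \<in> C} \<subseteq> fst ` C" by (auto simp: fst_eq_Domain)
    show "finite (fst ` C)" using bip_cycle_finite[OF that] by (rule finite_imageI)
  qed
  have "2 = card {i. (i, j) \<in> C1 \<union> C2}"
    using assms(1,5) unfolding two_factor_def by simp
  also have "\<dots> = card {i. (i, j) \<in> C1} + card {i. (i, j) \<in> C2}"
    using assms(2) fin[OF assms(3)] fin[OF assms(4)] by (subst card_Un_disjoint[symmetric]) (auto intro: arg_cong[where f = card])
  finally show ?thesis
    unfolding bip_cycle_col_degree[OF assms(3)] bip_cycle_col_degree[OF assms(4)]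
    by (cases "j \<in> snd ` C1"; cases "j \<in> snd ` C2") simp_all
qed

lemma cycle_pair_rows_partition:
  assumes "two_factor n (C1 \<union> C2)" and "C1 \<inter> C2 = {}" and "bip_cycle n n C1" and "bip_cycle n n C2"
  shows "fst ` C1 \<union> fst ` C2 = {..<n}" and "fst ` C1 \<inter> fst ` C2 = {}"
proof -
  have "fst ` C1 \<subseteq> {..<n}" "fst ` C2 \<subseteq> {..<n}"
    using bip_cycle_subset[OF assms(3)] bip_cycle_subset[OF assms(4)] by auto
  with cycle_pair_row_iff[OF assms] show "fst ` C1 \<union> fst ` C2 = {..<n}" "fst ` C1 \<inter> fst ` C2 = {}"
    by blast+
qed

lemma equal_halves_complementary:
  assumes "finite U" and "R1 \<union> R2 = U" and "R1 \<inter> R2 = {}" and "Q1 \<union> Q2 = U" and "Q1 \<inter> Q2 = {}"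
    and "card R1 = card R2" and "card Q1 = card Q2" and "R1 \<inter> Q1 = {}"
  shows "R1 = Q2 \<and> R2 = Q1"
proof -
  have "finite (R1 \<union> R2)" "finite (Q1 \<union> Q2)" using assms(1,2,4) by simp_all
  then have fin: "finite R1" "finite R2" "finite Q1" "finite Q2" by simp_all
  have "card U = card R1 + card R2" "card U = card Q1 + card Q2"
    using assms(2-5) fin by (auto simp: card_Un_disjoint[symmetric])
  then have "card R1 = card Q2" using assms(6,7) by simp
  moreover have "R1 \<subseteq> Q2" using assms(2,4,8) by blast
  ultimately have "R1 = Q2" using fin by (simp add: card_subset_eq)
  with assms(2-5) show ?thesis by blast
qed

lemma equal_halves_cross:
  assumes "finite U" and "R1 \<union> R2 = U" and "R1 \<inter> R2 = {}" and "Q1 \<union> Q2 = U" and "Q1 \<inter> Q2 = {}"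
    and "card R1 = card R2" and "card Q1 = card Q2" and "R1 \<noteq> {}"
  obtains x y where "x \<in> R1" and "y \<in> R2" and "(x \<in> Q1 \<and> y \<in> Q2) \<or> (x \<in> Q2 \<and> y \<in> Q1)"
proof -
  have "R2 \<noteq> {}" using assms(1,2,6,8) by (metis card_0_eq finite_Un)
  show ?thesis
  proof (cases "R1 \<inter> Q1 = {}")
    case True
    then have "R1 = Q2 \<and> R2 = Q1" using assms(1-7) by (rule equal_halves_complementary[rotated 7])
    with assms(8) \<open>R2 \<noteq> {}\<close> that show ?thesis by blast
  next
    case False
    have "R2 \<inter> Q2 \<noteq> {}"
    proof
      assume "R2 \<inter> Q2 = {}"
      then have "R2 = Q1 \<and> R1 = Q2"
        using assms(1-7) by (intro equal_halves_complementary[of U R2 R1 Q2 Q1]) auto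
      with False assms(5) show False by blast
    qed
    with False that show ?thesis by blast
  qed
qed

definition cycles_separate_rows :: "nat \<Rightarrow> (nat \<times> nat) set \<Rightarrow> nat \<Rightarrow> nat \<Rightarrow> bool" where
  "cycles_separate_rows n S x y \<longleftrightarrow> (\<exists>C1 C2. C1 \<inter> C2 = {} \<and> S = C1 \<union> C2
     \<and> bip_cycle n n C1 \<and> bip_cycle n n C2 \<and> x \<in> fst ` C1 \<and> y \<in> fst ` C2)"

lemma cycles_separate_rowsI:
  "C1 \<inter> C2 = {} \<Longrightarrow> S = C1 \<union> C2 \<Longrightarrow> bip_cycle n n C1 \<Longrightarrow> bip_cycle n n C2
    \<Longrightarrow> x \<in> fst ` C1 \<Longrightarrow> y \<in> fst ` C2 \<Longrightarrow> cycles_separate_rows n S x y"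
  unfolding cycles_separate_rows_def by blast

lemma two_cycle_factors_separate_rows:
  assumes "two_cycle_factor n S1" and "two_cycle_factor n S2"
  obtains x y where "cycles_separate_rows n S1 x y" and "cycles_separate_rows n S2 x y"
proof -
  obtain C1 C2 where C: "C1 \<inter> C2 = {}" "S1 = C1 \<union> C2" "bip_cycle n n C1" "bip_cycle n n C2"
    and "two_factor n (C1 \<union> C2)"
    using assms(1) unfolding two_cycle_factor_def by blast
  obtain D1 D2 where D: "D1 \<inter> D2 = {}" "S2 = D1 \<union> D2" "bip_cycle n n D1" "bip_cycle n n D2"
    and "two_factor n (D1 \<union> D2)"
    using assms(2) unfolding two_cycle_factor_def by blast
  have "card (fst ` C1) = card (fst ` C2)" "card (fst ` D1) = card (fst ` D2)"
    using bip_cycle_card_rows[OF C(3)] bip_cycle_card_rows[OF C(4)]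
      bip_cycle_card_rows[OF D(3)] bip_cycle_card_rows[OF D(4)] by simp_all
  moreover have "fst ` C1 \<noteq> {}"
    using bip_cycle_card_rows[OF C(3)] bip_cycle_length[OF C(3)] by auto
  ultimately obtain x y where "x \<in> fst ` C1" "y \<in> fst ` C2"
    and "(x \<in> fst ` D1 \<and> y \<in> fst ` D2) \<or> (x \<in> fst ` D2 \<and> y \<in> fst ` D1)"
    using equal_halves_cross[OF finite_lessThan[of n]
      cycle_pair_rows_partition[OF \<open>two_factor n (C1 \<union> C2)\<close> C(1,3,4)]
      cycle_pair_rows_partition[OF \<open>two_factor n (D1 \<union> D2)\<close> D(1,3,4)]] by blast
  moreover have "cycles_separate_rows n S1 x y"
    using cycles_separate_rowsI[OF C(1-4)] \<open>x \<in> fst ` C1\<close> \<open>y \<in> fst ` C2\<close> by blast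
  moreover have "D2 \<inter> D1 = {}" "S2 = D2 \<union> D1" using D(1,2) by blast+
  ultimately show ?thesis
    using that cycles_separate_rowsI[OF D(1-4)] cycles_separate_rowsI[of D2 D1 S2 n, OF _ _ D(4,3)] by blast
qed

lemma shifted_ranges_disjoint:
  "a + int n < b \<Longrightarrow> (\<lambda>i. a + int i) ` {1..n} \<inter> (\<lambda>i. b + int i) ` {1..n} = {}"
  by auto

lemma two_cycle_factor_labelling:
  assumes "two_cycle_factor n S" and "cycles_separate_rows n S x y"
    and "\<bar>\<sigma>\<bar> = 1" and "X \<ge> 0" and "X + int n < Y"
  obtains F :: "nat \<Rightarrow> nat \<Rightarrow> int" where "array_support F = S" and "shiftable n F"
    and "bij_betw (\<lambda>(i, j). \<bar>F i j\<bar>) S ((\<lambda>i. X + int i) ` {1..n} \<union> (\<lambda>i. Y + int i) ` {1..n})"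
    and "\<And>i. i < n \<Longrightarrow> (\<Sum>j<n. F i j) = \<sigma> * (if i = x \<or> i = y then 1 - int n else 1)"
    and "\<And>j. j < n \<Longrightarrow> (\<Sum>i<n. F i j) = - \<sigma>"
proof -
  obtain C1 C2 where C: "C1 \<inter> C2 = {}" "S = C1 \<union> C2" "bip_cycle n n C1" "bip_cycle n n C2"
    and x: "x \<in> fst ` C1" and y: "y \<in> fst ` C2"
    using assms(2) unfolding cycles_separate_rows_def by blast
  have two_factor: "two_factor n (C1 \<union> C2)"
    using assms(1) C(2) unfolding two_cycle_factor_def by simp
  obtain F1 where F1: "array_support F1 = C1" "shiftable n F1"
      "bij_betw (\<lambda>(i, j). \<bar>F1 i j\<bar>) C1 ((\<lambda>i. X + int i) ` {1..n})"
      "\<And>i. (\<Sum>j<n. F1 i j) = (if i \<in> fst ` C1 then if i = x then \<sigma> * (1 - int n) else \<sigma> else 0)"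
      "\<And>j. (\<Sum>i<n. F1 i j) = (if j \<in> snd ` C1 then - \<sigma> else 0)"
    using bip_cycle_labelling[OF C(3) x assms(3,4)] by blast
  have "Y \<ge> 0" using assms(4,5) by simp
  obtain F2 where F2: "array_support F2 = C2" "shiftable n F2"
      "bij_betw (\<lambda>(i, j). \<bar>F2 i j\<bar>) C2 ((\<lambda>i. Y + int i) ` {1..n})"
      "\<And>i. (\<Sum>j<n. F2 i j) = (if i \<in> fst ` C2 then if i = y then \<sigma> * (1 - int n) else \<sigma> else 0)"
      "\<And>j. (\<Sum>i<n. F2 i j) = (if j \<in> snd ` C2 then - \<sigma> else 0)"
    using bip_cycle_labelling[OF C(4) y assms(3) \<open>Y \<ge> 0\<close>] by blast
  have disjoint: "array_support F1 \<inter> array_support F2 = {}" using C(1) F1(1) F2(1) by simp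
  have "x \<notin> fst ` C2" "y \<notin> fst ` C1"
    using x y cycle_pair_rows_partition[OF two_factor C(1,3,4)] by blast+
  show ?thesis
  proof (rule that[of "\<lambda>i j. F1 i j + F2 i j"])
    show "array_support (\<lambda>i j. F1 i j + F2 i j) = S"
      using array_support_add[OF disjoint] F1(1) F2(1) C(2) by simp
    show "shiftable n (\<lambda>i j. F1 i j + F2 i j)"
      using disjoint F1(2) F2(2) by (rule shiftable_add)
    show "bij_betw (\<lambda>(i, j). \<bar>F1 i j + F2 i j\<bar>) S ((\<lambda>i. X + int i) ` {1..n} \<union> (\<lambda>i. Y + int i) ` {1..n})"
      unfolding C(2) using F1(1,3) F2(1,3) C(1) shifted_ranges_disjoint[OF assms(5)]
      by (intro bij_betw_abs_add) auto
    show "(\<Sum>j<n. F1 i j + F2 i j) = \<sigma> * (if i = x \<or> i = y then 1 - int n else 1)" if "i < n" for i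
      using cycle_pair_row_iff[OF two_factor C(1,3,4) that] \<open>x \<notin> fst ` C2\<close> \<open>y \<notin> fst ` C1\<close> x y
      by (auto simp: sum.distrib F1(4) F2(4))
    show "(\<Sum>i<n. F1 i j + F2 i j) = - \<sigma>" if "j < n" for j
      using cycle_pair_col_iff[OF two_factor C(1,3,4) that]
      by (auto simp: sum.distrib F1(5) F2(5))
  qed
qed

theorem lemma2p4:
  fixes n :: nat and S1 S2 :: "(nat \<times> nat) set" and s t u v :: int
  assumes "even n"
    and "two_cycle_factor n S1" and "two_cycle_factor n S2"
    and "S1 \<inter> S2 = {}"
    and "s > 0" and "t > 0" and "u > 0" and "v > 0"
    and "s > t + int n" and "t > u + int n" and "u > v + int n"
  shows "\<exists>A :: nat \<Rightarrow> nat \<Rightarrow> int.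
     (\<forall>i j. (i, j) \<in> S1 \<union> S2 \<longrightarrow> A i j \<noteq> 0)
   \<and> (\<forall>i j. (i, j) \<notin> S1 \<union> S2 \<longrightarrow> A i j = 0)
   \<and> shiftable n A
   \<and> bij_betw (\<lambda>(i, j). \<bar>A i j\<bar>) (S1 \<union> S2)
       ((\<lambda>i. s + int i) ` {1..n} \<union> (\<lambda>i. t + int i) ` {1..n}
        \<union> (\<lambda>i. u + int i) ` {1..n} \<union> (\<lambda>i. v + int i) ` {1..n})
   \<and> (\<forall>i<n. (\<Sum>j<n. A i j) = 0)
   \<and> (\<forall>j<n. (\<Sum>i<n. A i j) = 0)"
proof -
  obtain x y where sep: "cycles_separate_rows n S1 x y" "cycles_separate_rows n S2 x y"
    using two_cycle_factors_separate_rows[OF assms(2,3)] by blast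
  obtain F where F: "array_support F = S1" "shiftable n F"
      "bij_betw (\<lambda>(i, j). \<bar>F i j\<bar>) S1 ((\<lambda>i. t + int i) ` {1..n} \<union> (\<lambda>i. s + int i) ` {1..n})"
      "\<And>i. i < n \<Longrightarrow> (\<Sum>j<n. F i j) = 1 * (if i = x \<or> i = y then 1 - int n else 1)"
      "\<And>j. j < n \<Longrightarrow> (\<Sum>i<n. F i j) = - 1"
    using two_cycle_factor_labelling[OF assms(2) sep(1), of 1 t s] assms(6,9) by auto
  obtain G where G: "array_support G = S2" "shiftable n G"
      "bij_betw (\<lambda>(i, j). \<bar>G i j\<bar>) S2 ((\<lambda>i. v + int i) ` {1..n} \<union> (\<lambda>i. u + int i) ` {1..n})"
      "\<And>i. i < n \<Longrightarrow> (\<Sum>j<n. G i j) = - 1 * (if i = x \<or> i = y then 1 - int n else 1)"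
      "\<And>j. j < n \<Longrightarrow> (\<Sum>i<n. G i j) = - (- 1)"
    using two_cycle_factor_labelling[OF assms(3) sep(2), of "- 1" v u] assms(8,11) by auto
  have disjoint: "array_support F \<inter> array_support G = {}" using assms(4) F(1) G(1) by simp
  have "bij_betw (\<lambda>(i, j). \<bar>F i j + G i j\<bar>) (S1 \<union> S2)
      (((\<lambda>i. t + int i) ` {1..n} \<union> (\<lambda>i. s + int i) ` {1..n})
       \<union> ((\<lambda>i. v + int i) ` {1..n} \<union> (\<lambda>i. u + int i) ` {1..n}))"
    using F(1,3) G(1,3) assms(4,9-11) by (intro bij_betw_abs_add) auto
  then show ?thesis
    using array_support_add[OF disjoint] shiftable_add[OF disjoint F(2) G(2)] F(1,4,5) G(1,4,5)
    by (intro exI[of _ "\<lambda>i j. F i j + G i j"])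
      (auto simp: array_support_def sum.distrib Un_ac)
qed
end
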